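(* Let $0\le k<n$ and let $U\subset Gr(k,n)$. If $U$ is open, then $\bigcup_{\ell\in U}\ell$ is an open subset of $\mathbb{P}^n_{\mathbb{C}}$; if $U$ is closed, then $\bigcup_{\ell\in U}\ell$ is a closed subset of $\mathbb{P}^n_{\mathbb{C}}$.
   Context: $Gr(k,n)$ is the Grassmannian of $k$-dimensional projective subspaces of $\mathbb{P}^n_{\mathbb{C}}$, topologized by the Hausdorff metric on closed subsets of $\mathbb{P}^n_{\mathbb{C}}$ induced by the Fubini–Study metric (equivalently via the Plücker embedding into $\mathbb{P}(\bigwedge^{k+1}\mathbb{C}^{n+1})$). *)

theory Defs
  imports "HOL-Analysis.Analysis"
begin

text \<open>Complex projective space P(C^'n): its points are the complex lines
 (1-dimensional complex linear subspaces) of C^'n, where CARD('n) = n+1.\<close>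

definition proj_points :: "((complex^'n) set) set" where
  "proj_points = {L. vec.subspace L \<and> vec.dim L = 1}"

definition herm :: "complex^'n \<Rightarrow> complex^'n \<Rightarrow> complex" where
  "herm u v = (\<Sum>i\<in>UNIV. u$i * cnj (v$i))"

definition rep :: "(complex^'n) set \<Rightarrow> complex^'n" where
  "rep L = (SOME u. u \<in> L \<and> u \<noteq> 0)"

definition fs_dist :: "(complex^'n) set \<Rightarrow> (complex^'n) set \<Rightarrow> real" where
  "fs_dist L M = arccos (cmod (herm (rep L) (rep M)) / (norm (rep L) * norm (rep M)))"

definition hausdorff_dist :: "('a \<Rightarrow> 'a \<Rightarrow> real) \<Rightarrow> 'a set \<Rightarrow> 'a set \<Rightarrow> real" where
  "hausdorff_dist d A B =
     max (SUP a\<in>A. INF b\<in>B. d a b) (SUP b\<in>B. INF a\<in>A. d a b)"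

definition dist_topology :: "'a set \<Rightarrow> ('a \<Rightarrow> 'a \<Rightarrow> real) \<Rightarrow> 'a topology" where
  "dist_topology M d = topology (\<lambda>U. U \<subseteq> M \<and>
      (\<forall>x\<in>U. \<exists>e>0. \<forall>y\<in>M. d x y < e \<longrightarrow> y \<in> U))"

definition proj_topology :: "((complex^'n) set) topology" where
  "proj_topology = dist_topology proj_points fs_dist"

text \<open>A k-dimensional projective subspace, viewed as the set of points of
 projective space lying in a (k+1)-dimensional complex linear subspace W.\<close>
definition proj_subspace_of :: "(complex^'n) set \<Rightarrow> ((complex^'n) set) set" where
  "proj_subspace_of W = {L \<in> proj_points. L \<subseteq> W}"

definition grassmannian :: "nat \<Rightarrow> (((complex^'n) set) set) set" where
  "grassmannian k = {proj_subspace_of W | W. vec.subspace W \<and> vec.dim W = k + 1}"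

definition grassmannian_topology :: "nat \<Rightarrow> (((complex^'n) set) set) topology" where
  "grassmannian_topology k = dist_topology (grassmannian k) (hausdorff_dist fs_dist)"

end

theory Submission
  imports Defs
begin

text \<open>A complex-linear map T with \<open>\<parallel>T x - x\<parallel> \<le> \<epsilon> \<parallel>x\<parallel>\<close> moves every line by
 Fubini--Study distance at most \<open>arccos (1 - \<epsilon>\<^sup>2)\<close>, hence moves every projective
 subspace by at most that much in Hausdorff distance; the linear map sending an
 orthonormal frame to a nearby one is such a map.

 Openness: if x lies on \<open>\<ell> \<in> U\<close> and the point q is close to x, then unit
 representatives u of x and v of q can be chosen close to each other, and the
 map sending u to v carries \<open>\<ell>\<close> to a nearby subspace, which lies in U and
 contains q.

 Closedness: if p is a limit of points \<open>q\<^sub>j \<in> \<ell>\<^sub>j \<in> U\<close>, then by compactness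
 orthonormal frames of the \<open>\<ell>\<^sub>j\<close> have a subsequence converging to an orthonormal
 frame of some \<open>\<ell>\<close>. Transporting unit representatives of the \<open>q\<^sub>j\<close> along the
 frames shows \<open>p \<in> \<ell>\<close>; and \<open>\<ell> \<in> U\<close>, since otherwise the open complement of U
 would contain the \<open>\<ell>\<^sub>j\<close> for large j.\<close>

section \<open>The Hermitian product\<close>

lemma herm_cnj_swap: "herm b a = cnj (herm a b)"
  unfolding herm_def by (simp add: mult.commute)

lemma Re_herm: "Re (herm a b) = inner a b"
  unfolding herm_def inner_vec_def by (simp add: inner_complex_def)

lemma herm_self: "herm a a = complex_of_real ((norm a)\<^sup>2)"
proof -
  have "herm a a = (\<Sum>i\<in>UNIV. complex_of_real ((cmod (a$i))\<^sup>2))"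
    unfolding herm_def by (simp add: complex_norm_square[symmetric])
  also have "\<dots> = complex_of_real ((norm a)\<^sup>2)"
    unfolding norm_vec_def L2_set_def by (simp add: sum_nonneg)
  finally show ?thesis .
qed

lemma herm_scale_left: "herm (c *s a) b = c * herm a b"
  unfolding herm_def by (simp add: sum_distrib_left mult.assoc)

lemma herm_scale_right: "herm a (c *s b) = cnj c * herm a b"
  unfolding herm_def by (simp add: sum_distrib_left mult_ac)

lemma herm_add_left: "herm (a + a') b = herm a b + herm a' b"
  unfolding herm_def by (simp add: distrib_right sum.distrib)

lemma herm_diff_left: "herm (a - a') b = herm a b - herm a' b"
  unfolding herm_def by (simp add: left_diff_distrib sum_subtractf)

lemma herm_zero_left [simp]: "herm 0 b = 0"
  unfolding herm_def by simp

lemma herm_sum_left: "herm (\<Sum>x\<in>A. f x) b = (\<Sum>x\<in>A. herm (f x) b)"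
  unfolding herm_def by (simp add: sum_distrib_right sum.swap[of _ UNIV])

lemma herm_tendsto:
  assumes "(a \<longlongrightarrow> x) F" and "(b \<longlongrightarrow> y) F"
  shows "((\<lambda>j. herm (a j) (b j)) \<longlongrightarrow> herm x y) F"
  unfolding herm_def by (intro tendsto_intros assms)

lemma norm_scale: "norm (c *s (a::complex^'n)) = cmod c * norm a"
proof -
  have "complex_of_real ((norm (c *s a))\<^sup>2) = complex_of_real ((cmod c * norm a)\<^sup>2)"
    unfolding herm_self[symmetric] herm_scale_left herm_scale_right
    by (simp add: herm_self power_mult_distrib complex_norm_square[symmetric] mult_ac)
  then show ?thesis by (simp del: of_real_power)
qed

lemma herm_Cauchy_Schwarz: "cmod (herm a b) \<le> norm a * norm b"
proof (cases "herm a b = 0")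
  case False
  define c where "c = cnj (herm a b) / complex_of_real (cmod (herm a b))"
  have "complex_of_real (cmod (herm a b)) = c * herm a b"
    using False unfolding c_def
    by (simp add: mult.commute[of "cnj _"] complex_norm_square[symmetric] power2_eq_square)
  then have "cmod (herm a b) = inner (c *s a) b"
    by (metis Re_complex_of_real Re_herm herm_scale_left)
  also have "\<dots> \<le> norm (c *s a) * norm b" by (rule norm_cauchy_schwarz)
  also have "\<dots> = norm a * norm b"
    using False by (simp add: norm_scale c_def norm_divide)
  finally show ?thesis .
qed simp

section \<open>Lines and the Fubini--Study distance\<close>

lemma span_singleton_in_proj_points: "(a::complex^'n) \<noteq> 0 \<Longrightarrow> vec.span {a} \<in> proj_points"
  unfolding proj_points_def by (simp add: vec.dim_span_eq_card_independent)

lemma proj_point_eq_span: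
  assumes L: "L \<in> proj_points" and a: "a \<in> L" "a \<noteq> 0"
  shows "L = vec.span {a}"
proof -
  have "vec.subspace L" "vec.dim L = 1" using L unfolding proj_points_def by auto
  moreover have "vec.span {a} \<subseteq> L" using a \<open>vec.subspace L\<close> by (simp add: vec.span_minimal)
  moreover have "vec.dim (vec.span {a}) = 1" using a by (simp add: vec.dim_span_eq_card_independent)
  ultimately show ?thesis using vec.subspace_dim_equal[of "vec.span {a}" L] by simp
qed

lemma rep_in_nonzero:
  assumes "L \<in> proj_points"
  shows "rep L \<in> L" and "rep L \<noteq> 0"
proof -
  have "\<not> L \<subseteq> {0}"
  proof
    assume "L \<subseteq> {0}"
    then have "vec.dim L = 0" by simp
    with assms show False unfolding proj_points_def by simp
  qed
  then have "\<exists>u. u \<in> L \<and> u \<noteq> 0" by auto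
  then have "rep L \<in> L \<and> rep L \<noteq> 0" unfolding rep_def by (rule someI_ex)
  then show "rep L \<in> L" "rep L \<noteq> 0" by auto
qed

lemma span_scale_singleton:
  assumes "c \<noteq> 0"
  shows "vec.span {c *s (a::complex^'n)} = vec.span {a}"
proof (cases "a = 0")
  case False
  have "c *s a \<in> vec.span {a}" by (simp add: vec.span_base vec.span_scale)
  then show ?thesis
    using proj_point_eq_span[OF span_singleton_in_proj_points[OF False]] assms False by simp
qed simp

lemma proj_point_unit_rep:
  assumes "L \<in> proj_points"
  obtains u where "norm u = 1" and "L = vec.span {u}"
proof
  let ?r = "rep L"
  have "?r \<noteq> 0" using rep_in_nonzero[OF assms] by simp
  then show "norm (complex_of_real (1 / norm ?r) *s ?r) = 1" by (simp add: norm_scale norm_divide)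
  show "L = vec.span {complex_of_real (1 / norm ?r) *s ?r}"
    using rep_in_nonzero[OF assms] proj_point_eq_span[OF assms] by (simp add: span_scale_singleton)
qed

definition fs_cos :: "complex^'n \<Rightarrow> complex^'n \<Rightarrow> real" where
  "fs_cos a b = cmod (herm a b) / (norm a * norm b)"

lemma fs_cos_scale: "c \<noteq> 0 \<Longrightarrow> c' \<noteq> 0 \<Longrightarrow> fs_cos (c *s a) (c' *s b) = fs_cos a b"
  unfolding fs_cos_def by (simp add: herm_scale_left herm_scale_right norm_scale norm_mult)

lemma fs_cos_bounds: "0 \<le> fs_cos a b" "fs_cos a b \<le> 1"
  unfolding fs_cos_def using herm_Cauchy_Schwarz[of a b] by (auto simp: divide_le_eq_1)

lemma fs_dist_nonneg: "0 \<le> fs_dist L M"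
  unfolding fs_dist_def fs_cos_def[symmetric]
  using fs_cos_bounds[of "rep L" "rep M"] by (intro arccos_lbound) auto

lemma fs_dist_span:
  assumes "a \<noteq> 0" "b \<noteq> 0"
  shows "fs_dist (vec.span {a}) (vec.span {b}) = arccos (fs_cos a b)"
proof -
  have A: "vec.span {a} \<in> proj_points" "vec.span {b} \<in> proj_points"
    using assms span_singleton_in_proj_points by auto
  obtain c where c: "rep (vec.span {a}) = c *s a"
    using rep_in_nonzero(1)[OF A(1)] by (auto simp: vec.span_singleton)
  obtain c' where c': "rep (vec.span {b}) = c' *s b"
    using rep_in_nonzero(1)[OF A(2)] by (auto simp: vec.span_singleton)
  have "c \<noteq> 0" "c' \<noteq> 0" using c c' rep_in_nonzero(2)[OF A(1)] rep_in_nonzero(2)[OF A(2)] by auto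
  then show ?thesis unfolding fs_dist_def c c' fs_cos_def[symmetric] by (simp add: fs_cos_scale)
qed

lemma fs_cos_near:
  fixes a b :: "complex^'n"
  assumes a: "a \<noteq> 0" and ab: "norm (b - a) \<le> e * norm a" and e: "0 \<le> e" "e \<le> 1/2"
  shows "b \<noteq> 0" and "1 - e\<^sup>2 \<le> fs_cos a b"
proof -
  define x y where "x = norm a" and "y = norm b"
  have x: "x > 0" using a by (simp add: x_def)
  have "e * norm a \<le> (1/2) * norm a" using e by (intro mult_right_mono) auto
  then have y: "y \<ge> x / 2"
    using ab norm_triangle_ineq2[of a b] norm_minus_commute[of a b] unfolding x_def y_def by linarith
  then show "b \<noteq> 0" using x by (auto simp: y_def)
  have "(norm (b - a))\<^sup>2 = y\<^sup>2 + x\<^sup>2 - 2 * inner a b"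
    unfolding x_def y_def power2_norm_eq_inner by (simp add: inner_diff_left inner_diff_right inner_commute)
  moreover have "(norm (b - a))\<^sup>2 \<le> e\<^sup>2 * x\<^sup>2"
    using ab unfolding x_def by (metis norm_ge_zero power_mono power_mult_distrib)
  moreover have "inner a b \<le> cmod (herm a b)" by (metis Re_herm complex_Re_le_cmod)
  ultimately have h: "x\<^sup>2 + y\<^sup>2 - e\<^sup>2 * x\<^sup>2 \<le> 2 * cmod (herm a b)" by simp
  have "0 \<le> (x - y)\<^sup>2 + e\<^sup>2 * x * (2*y - x)" using x y by simp
  then have "(1 - e\<^sup>2) * (x * y) \<le> cmod (herm a b)" using h by (simp add: power2_eq_square algebra_simps)
  then show "1 - e\<^sup>2 \<le> fs_cos a b" unfolding fs_cos_def x_def[symmetric] y_def[symmetric]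
    using x y by (simp add: le_divide_eq)
qed

section \<open>Linear maps close to the identity\<close>

abbreviation vec_linear :: "(complex^'n \<Rightarrow> complex^'n) \<Rightarrow> bool" where
  "vec_linear T \<equiv> Vector_Spaces.linear (*s) (*s) T"

lemma hausdorff_dist_image_le:
  assumes A: "A \<noteq> {}" and fAB: "f ` A = B" and c: "\<And>a. a \<in> A \<Longrightarrow> fs_dist a (f a) \<le> c"
  shows "hausdorff_dist fs_dist A B \<le> c"
proof -
  have bdd: "bdd_below ((\<lambda>b. fs_dist a b) ` S)" "bdd_below ((\<lambda>a. fs_dist a b) ` S)"
    for a b :: "(complex^'n) set" and S
    by (auto intro: bdd_belowI2[where m=0] simp: fs_dist_nonneg)
  have "(SUP a\<in>A. INF b\<in>B. fs_dist a b) \<le> c"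
  proof (rule cSUP_least[OF A])
    fix a assume "a \<in> A"
    then have "(INF b\<in>B. fs_dist a b) \<le> fs_dist a (f a)" using fAB by (intro cINF_lower bdd) auto
    then show "(INF b\<in>B. fs_dist a b) \<le> c" using c[OF \<open>a \<in> A\<close>] by simp
  qed
  moreover have "(SUP b\<in>B. INF a\<in>A. fs_dist a b) \<le> c"
  proof (rule cSUP_least)
    show "B \<noteq> {}" using A fAB by auto
    fix b assume "b \<in> B"
    then obtain a where a: "a \<in> A" "b = f a" using fAB by auto
    then have "(INF a\<in>A. fs_dist a b) \<le> fs_dist a (f a)" unfolding a(2) by (intro cINF_lower bdd)
    then show "(INF a\<in>A. fs_dist a b) \<le> c" using c[OF a(1)] by simp
  qed
  ultimately show ?thesis unfolding hausdorff_dist_def by simp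
qed

lemma proj_subspace_of_image:
  assumes T: "vec_linear T" "inj T" and W: "vec.subspace W"
  shows "(\<lambda>L. T ` L) ` proj_subspace_of W = proj_subspace_of (T ` W)"
proof -
  interpret T: Vector_Spaces.linear "(*s)" "(*s)" T by (rule T(1))
  have line: "T ` vec.span {a} = vec.span {T a}" for a
    using T.span_image[of "{a}"] by simp
  have nz: "T a \<noteq> 0" if "a \<noteq> 0" for a
    using that T(2) T.zero by (metis injD)
  show ?thesis
  proof (intro equalityI subsetI)
    fix M assume "M \<in> (\<lambda>L. T ` L) ` proj_subspace_of W"
    then obtain L where L: "L \<in> proj_points" "L \<subseteq> W" "M = T ` L"
      unfolding proj_subspace_of_def by auto
    have "M = vec.span {T (rep L)}"
      using L line proj_point_eq_span[OF L(1) rep_in_nonzero[OF L(1)]] by metis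
    moreover have "M \<subseteq> T ` W" using L by auto
    ultimately show "M \<in> proj_subspace_of (T ` W)"
      using nz rep_in_nonzero[OF L(1)] span_singleton_in_proj_points
      unfolding proj_subspace_of_def by auto
  next
    fix M assume "M \<in> proj_subspace_of (T ` W)"
    then have M: "M \<in> proj_points" "M \<subseteq> T ` W" unfolding proj_subspace_of_def by auto
    then obtain w where w: "w \<in> W" "rep M = T w" using rep_in_nonzero(1)[OF M(1)] by auto
    then have "w \<noteq> 0" using rep_in_nonzero(2)[OF M(1)] T.zero by auto
    moreover have "vec.span {w} \<subseteq> W" using w W by (simp add: vec.span_minimal)
    moreover have "T ` vec.span {w} = M"
      using line w proj_point_eq_span[OF M(1) rep_in_nonzero[OF M(1)]] by metis
    ultimately show "M \<in> (\<lambda>L. T ` L) ` proj_subspace_of W"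
      using span_singleton_in_proj_points unfolding proj_subspace_of_def by force
  qed
qed

lemma near_identity_perturbation:
  assumes lin: "vec_linear T" and bd: "\<And>x. norm (T x - x) \<le> e * norm x"
    and e: "0 \<le> e" "e \<le> 1/2" and W: "vec.subspace W" "W \<noteq> {0}"
  shows "vec.subspace (T ` W)" and "vec.dim (T ` W) = vec.dim W"
    and "hausdorff_dist fs_dist (proj_subspace_of W) (proj_subspace_of (T ` W)) \<le> arccos (1 - e\<^sup>2)"
proof -
  interpret T: Vector_Spaces.linear "(*s)" "(*s)" T by (rule lin)
  have nz: "T x \<noteq> 0" if "x \<noteq> 0" for x
    using fs_cos_near(1)[OF that bd e] .
  have inj: "inj T"
    by (rule injI) (metis T.diff eq_iff_diff_eq_0 nz)
  show "vec.subspace (T ` W)" using T.subspace_image[OF W(1)] .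
  show "vec.dim (T ` W) = vec.dim W"
    using vec.dim_image_eq[OF lin] inj by (auto intro: inj_on_subset)
  have moved: "fs_dist L (T ` L) \<le> arccos (1 - e\<^sup>2)" if L: "L \<in> proj_points" for L
  proof -
    let ?r = "rep L"
    have r: "?r \<noteq> 0" "L = vec.span {?r}"
      using rep_in_nonzero[OF L] proj_point_eq_span[OF L] by auto
    have "T ` L = vec.span {T ?r}" using T.span_image[of "{?r}"] r(2) by simp
    moreover have "1 - e\<^sup>2 \<le> fs_cos ?r (T ?r)" using fs_cos_near(2)[OF r(1) bd e] .
    moreover have "e\<^sup>2 \<le> 1" using e by (simp add: power_le_one)
    ultimately show ?thesis
      using r fs_dist_span[OF r(1) nz[OF r(1)]] fs_cos_bounds[of ?r "T ?r"]
      by (auto intro!: arccos_le_mono[THEN iffD2])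
  qed
  obtain w where w: "w \<in> W" "w \<noteq> 0" using W vec.subspace_0 by blast
  then have "vec.span {w} \<in> proj_subspace_of W"
    using span_singleton_in_proj_points W(1) unfolding proj_subspace_of_def by (simp add: vec.span_minimal)
  then show "hausdorff_dist fs_dist (proj_subspace_of W) (proj_subspace_of (T ` W)) \<le> arccos (1 - e\<^sup>2)"
    using proj_subspace_of_image[OF lin inj W(1)] moved
    by (intro hausdorff_dist_image_le) (auto simp: proj_subspace_of_def)
qed

section \<open>Moving one orthonormal frame to another\<close>

definition orthonormal_frame :: "'i set \<Rightarrow> ('i \<Rightarrow> complex^'n) \<Rightarrow> bool" where
  "orthonormal_frame I f \<longleftrightarrow> (\<forall>i\<in>I. \<forall>j\<in>I. herm (f i) (f j) = (if i = j then 1 else 0))"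

text \<open>For an orthonormal frame f this sends each \<open>f i\<close> to \<open>g i\<close> and fixes the
 orthogonal complement of the \<open>f i\<close>.\<close>
definition frame_map :: "'i set \<Rightarrow> ('i \<Rightarrow> complex^'n) \<Rightarrow> ('i \<Rightarrow> complex^'n) \<Rightarrow> complex^'n \<Rightarrow> complex^'n"
  where "frame_map I f g x = x + (\<Sum>i\<in>I. herm x (f i) *s (g i - f i))"

lemma orthonormal_frame_norm:
  assumes "orthonormal_frame I f" "i \<in> I"
  shows "norm (f i) = 1"
proof -
  have "complex_of_real ((norm (f i))\<^sup>2) = 1"
    using assms herm_self[of "f i"] unfolding orthonormal_frame_def by simp
  then have "(norm (f i))\<^sup>2 = 1" by (simp only: of_real_eq_1_iff)
  then show ?thesis using norm_ge_zero[of "f i"] by (auto simp: power2_eq_1_iff)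
qed

lemma linear_frame_map:
  fixes f g :: "'i \<Rightarrow> complex^'n"
  shows "vec_linear (frame_map I f g)"
  unfolding Vector_Spaces.linear_iff
proof (intro conjI allI vec.vector_space_axioms)
  fix x y :: "complex^'n" and c :: complex
  show "frame_map I f g (x + y) = frame_map I f g x + frame_map I f g y"
    unfolding frame_map_def
    by (simp add: herm_add_left sum.distrib[symmetric] algebra_simps)
  show "frame_map I f g (c *s x) = c *s frame_map I f g x"
    unfolding frame_map_def
    by (simp add: herm_scale_left vec.scale_sum_right)
qed

lemma frame_map_norm_diff_le:
  assumes "orthonormal_frame I f"
  shows "norm (frame_map I f g x - x) \<le> (\<Sum>i\<in>I. norm (g i - f i)) * norm x"
proof -
  have "norm (frame_map I f g x - x) \<le> (\<Sum>i\<in>I. norm (herm x (f i) *s (g i - f i)))"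
    unfolding frame_map_def by (simp add: norm_sum)
  also have "\<dots> \<le> (\<Sum>i\<in>I. norm (g i - f i) * norm x)"
  proof (rule sum_mono)
    fix i assume "i \<in> I"
    then have "cmod (herm x (f i)) \<le> norm x"
      using herm_Cauchy_Schwarz[of x "f i"] orthonormal_frame_norm[OF assms] by simp
    then show "norm (herm x (f i) *s (g i - f i)) \<le> norm (g i - f i) * norm x"
      unfolding norm_scale by (simp add: mult.commute mult_right_mono)
  qed
  finally show ?thesis by (simp add: sum_distrib_right)
qed

lemma frame_map_frame:
  assumes "finite I" "orthonormal_frame I f" "j \<in> I"
  shows "frame_map I f g (f j) = g j"
proof -
  have "(\<Sum>i\<in>I. herm (f j) (f i) *s (g i - f i)) = (\<Sum>i\<in>I. if i = j then g j - f j else 0)"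
    using assms(2,3) unfolding orthonormal_frame_def by (intro sum.cong) auto
  then show ?thesis using assms(1,3) unfolding frame_map_def by simp
qed

lemma frame_map_image_span:
  assumes "finite I" "orthonormal_frame I f"
  shows "frame_map I f g ` vec.span (f ` I) = vec.span (g ` I)"
proof -
  interpret T: Vector_Spaces.linear "(*s)" "(*s)" "frame_map I f g" by (rule linear_frame_map)
  have "frame_map I f g ` f ` I = g ` I" using frame_map_frame[OF assms] by (force simp: image_image)
  then show ?thesis using T.span_image[of "f ` I"] by simp
qed

lemma openin_dist_topology:
  "openin (dist_topology M d) S \<longleftrightarrow> S \<subseteq> M \<and> (\<forall>x\<in>S. \<exists>e>0. \<forall>y\<in>M. d x y < e \<longrightarrow> y \<in> S)"
proof -
  have "istopology (\<lambda>U. U \<subseteq> M \<and> (\<forall>x\<in>U. \<exists>e>0. \<forall>y\<in>M. d x y < e \<longrightarrow> y \<in> U))"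
    unfolding istopology_def
  proof (rule conjI; intro allI impI)
    fix S T assume S: "S \<subseteq> M \<and> (\<forall>x\<in>S. \<exists>e>0. \<forall>y\<in>M. d x y < e \<longrightarrow> y \<in> S)"
      and T: "T \<subseteq> M \<and> (\<forall>x\<in>T. \<exists>e>0. \<forall>y\<in>M. d x y < e \<longrightarrow> y \<in> T)"
    show "S \<inter> T \<subseteq> M \<and> (\<forall>x\<in>S \<inter> T. \<exists>e>0. \<forall>y\<in>M. d x y < e \<longrightarrow> y \<in> S \<inter> T)"
    proof (intro conjI ballI)
      show "S \<inter> T \<subseteq> M" using S by auto
      fix x assume "x \<in> S \<inter> T"
      then obtain e1 e2 where "e1 > 0" "\<forall>y\<in>M. d x y < e1 \<longrightarrow> y \<in> S"
        and "e2 > 0" "\<forall>y\<in>M. d x y < e2 \<longrightarrow> y \<in> T"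
        using S T by blast
      then show "\<exists>e>0. \<forall>y\<in>M. d x y < e \<longrightarrow> y \<in> S \<inter> T"
        by (intro exI[of _ "min e1 e2"]) auto
    qed
  next
    fix K assume K: "\<forall>S\<in>K. S \<subseteq> M \<and> (\<forall>x\<in>S. \<exists>e>0. \<forall>y\<in>M. d x y < e \<longrightarrow> y \<in> S)"
    show "\<Union>K \<subseteq> M \<and> (\<forall>x\<in>\<Union>K. \<exists>e>0. \<forall>y\<in>M. d x y < e \<longrightarrow> y \<in> \<Union>K)"
    proof (intro conjI ballI)
      show "\<Union>K \<subseteq> M" using K by auto
      fix x assume "x \<in> \<Union>K"
      then obtain S where "S \<in> K" "x \<in> S" by auto
      then obtain e where "e > 0" "\<forall>y\<in>M. d x y < e \<longrightarrow> y \<in> S" using K by blast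
      then show "\<exists>e>0. \<forall>y\<in>M. d x y < e \<longrightarrow> y \<in> \<Union>K" using \<open>S \<in> K\<close> by blast
    qed
  qed
  then show ?thesis unfolding dist_topology_def by simp
qed

lemma topspace_dist_topology: "topspace (dist_topology M d) = M"
proof -
  have "openin (dist_topology M d) M"
    unfolding openin_dist_topology by (intro conjI ballI exI[of _ 1]) auto
  then show ?thesis
    unfolding topspace_def openin_dist_topology by blast
qed

lemma arccos_one_minus_square_small:
  assumes "0 < e"
  obtains \<epsilon> where "0 < \<epsilon>" "\<epsilon> \<le> 1/2" "arccos (1 - \<epsilon>\<^sup>2) < e"
proof
  define e' where "e' = min e (pi/2)"
  have e': "0 < e'" "e' \<le> e" "e' \<le> pi/2" using assms by (auto simp: e'_def)
  have c: "cos e' < 1" using cos_monotone_0_pi[of 0 e'] e' by simp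
  have c0: "0 \<le> cos e'" using e' by (intro cos_ge_zero) auto
  define \<epsilon> where "\<epsilon> = min (1/2) (sqrt ((1 - cos e') / 2))"
  show "0 < \<epsilon>" "\<epsilon> \<le> 1/2" using c by (auto simp: \<epsilon>_def)
  have "\<epsilon>\<^sup>2 \<le> (sqrt ((1 - cos e') / 2))\<^sup>2"
    using \<open>0 < \<epsilon>\<close> by (intro power_mono) (auto simp: \<epsilon>_def)
  then have "\<epsilon>\<^sup>2 < 1 - cos e'" using c by simp
  moreover have "\<epsilon>\<^sup>2 \<le> 1" using \<open>0 < \<epsilon>\<close> \<open>\<epsilon> \<le> 1/2\<close> by (simp add: power_le_one)
  ultimately have "arccos (1 - \<epsilon>\<^sup>2) < arccos (cos e')"
    using c0 c by (subst arccos_less_mono) (auto simp: abs_le_iff)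
  also have "\<dots> = e'" using e' by (intro arccos_cos) auto
  finally show "arccos (1 - \<epsilon>\<^sup>2) < e" using e' by simp
qed

lemma arccos_one_minus_half_square_pos:
  assumes "0 < t" "t \<le> 1"
  shows "0 < arccos (1 - t\<^sup>2/2)"
proof -
  have "t\<^sup>2 \<le> 1" using assms by (simp add: power_le_one)
  then have "arccos 1 < arccos (1 - t\<^sup>2/2)"
    using assms by (subst arccos_less_mono) (auto simp: abs_le_iff)
  then show ?thesis by simp
qed

lemma proj_points_Union_grassmannian: "U \<subseteq> grassmannian k \<Longrightarrow> \<Union>U \<subseteq> proj_points"
  unfolding grassmannian_def proj_subspace_of_def by blast

lemma openin_grassmannian_near_identity:
  assumes S: "openin (grassmannian_topology k) S"
    and W: "vec.subspace W" "vec.dim W = k + 1" and WS: "proj_subspace_of W \<in> S"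
  obtains \<epsilon> where "0 < \<epsilon>" "\<epsilon> \<le> 1/2"
    and "\<And>T. vec_linear T \<Longrightarrow> (\<And>x. norm (T x - x) \<le> \<epsilon> * norm x) \<Longrightarrow> proj_subspace_of (T ` W) \<in> S"
proof -
  obtain e where e: "e > 0"
    and ball: "\<And>m. m \<in> grassmannian k \<Longrightarrow> hausdorff_dist fs_dist (proj_subspace_of W) m < e \<Longrightarrow> m \<in> S"
    using S WS unfolding grassmannian_topology_def openin_dist_topology by blast
  obtain \<epsilon> where \<epsilon>: "0 < \<epsilon>" "\<epsilon> \<le> 1/2" "arccos (1 - \<epsilon>\<^sup>2) < e"
    using arccos_one_minus_square_small[OF e] .
  have "W \<noteq> {0}" using W(2) by auto
  have "proj_subspace_of (T ` W) \<in> S"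
    if "vec_linear T" "\<And>x. norm (T x - x) \<le> \<epsilon> * norm x" for T
  proof (rule ball)
    note P = near_identity_perturbation[OF that less_imp_le[OF \<epsilon>(1)] \<epsilon>(2) W(1) \<open>W \<noteq> {0}\<close>]
    show "proj_subspace_of (T ` W) \<in> grassmannian k"
      using P(1,2) W(2) unfolding grassmannian_def by auto
    show "hausdorff_dist fs_dist (proj_subspace_of W) (proj_subspace_of (T ` W)) < e"
      using P(3) \<epsilon>(3) by linarith
  qed
  with \<epsilon> show ?thesis using that by blast
qed

text \<open>Choosing the phase of v makes \<open>\<langle>v, u\<rangle>\<close> real and positive, and then
 \<open>\<parallel>v - u\<parallel>\<^sup>2 = 2 - 2 cos\<close> of the Fubini--Study distance.\<close>
lemma near_proj_point_unit_vector:
  assumes u: "norm u = 1" and q: "q \<in> proj_points" and t: "0 < t" "t \<le> 1"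
    and dq: "fs_dist (vec.span {u}) q < arccos (1 - t\<^sup>2/2)"
  obtains v where "v \<in> q" "norm v = 1" "norm (v - u) \<le> t"
proof -
  have t2: "t\<^sup>2 \<le> 1" using t by (simp add: power_le_one)
  define r where "r = rep q"
  have r0: "r \<noteq> 0" and qr: "q = vec.span {r}"
    using rep_in_nonzero[OF q] proj_point_eq_span[OF q] unfolding r_def by auto
  have "arccos (fs_cos u r) < arccos (1 - t\<^sup>2/2)"
    using dq fs_dist_span[OF _ r0, of u] u qr by fastforce
  then have cos: "fs_cos u r > 1 - t\<^sup>2/2"
    using fs_cos_bounds[of u r] t2 by (subst (asm) arccos_less_mono) (auto simp: abs_le_iff)
  define h where "h = herm u r"
  have cos_eq: "fs_cos u r = cmod h / norm r" unfolding fs_cos_def h_def u by simp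
  have h0: "h \<noteq> 0" using cos t2 cos_eq by auto
  define v where "v = (h / complex_of_real (cmod h * norm r)) *s r"
  have nv: "norm v = 1" unfolding v_def using h0 r0 by (simp add: norm_scale norm_divide norm_mult)
  have "herm v u = h * cnj h / complex_of_real (cmod h * norm r)"
    unfolding v_def h_def by (simp add: herm_scale_left herm_cnj_swap[of r u])
  also have "\<dots> = complex_of_real ((cmod h)\<^sup>2) / complex_of_real (cmod h * norm r)"
    by (simp only: complex_norm_square)
  also have "\<dots> = complex_of_real (fs_cos u r)"
    using h0 unfolding cos_eq by (simp add: power2_eq_square)
  finally have "inner v u = fs_cos u r" using Re_herm[of v u] by simp
  have "(norm (v - u))\<^sup>2 = (norm v)\<^sup>2 + (norm u)\<^sup>2 - 2 * inner v u"
    unfolding power2_norm_eq_inner by (simp add: inner_diff_left inner_diff_right inner_commute)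
  also have "\<dots> = 2 - 2 * fs_cos u r" using u nv \<open>inner v u = fs_cos u r\<close> by simp
  finally have "(norm (v - u))\<^sup>2 \<le> t\<^sup>2" using cos by simp
  then have "norm (v - u) \<le> t" by (rule power2_le_imp_le) (use t in auto)
  moreover have "v \<in> q" unfolding qr v_def by (rule vec.span_scale) (simp add: vec.span_base)
  ultimately show ?thesis using nv that by blast
qed

lemma openin_Union_grassmannian:
  assumes U: "U \<subseteq> grassmannian k" and "openin (grassmannian_topology k) U"
  shows "openin proj_topology (\<Union>U)"
  unfolding proj_topology_def openin_dist_topology
proof (intro conjI ballI)
  show "\<Union>U \<subseteq> proj_points" using proj_points_Union_grassmannian[OF U] .
  fix x assume "x \<in> \<Union>U"
  then obtain W where xW: "x \<in> proj_subspace_of W" and WU: "proj_subspace_of W \<in> U"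
    and W: "vec.subspace W" "vec.dim W = k + 1"
    using U unfolding grassmannian_def by blast
  obtain \<epsilon> where \<epsilon>: "0 < \<epsilon>" "\<epsilon> \<le> 1/2"
    and near: "\<And>T. vec_linear T \<Longrightarrow> (\<And>y. norm (T y - y) \<le> \<epsilon> * norm y) \<Longrightarrow> proj_subspace_of (T ` W) \<in> U"
    using openin_grassmannian_near_identity[OF assms(2) W WU] by blast
  obtain u where u: "norm u = 1" "x = vec.span {u}"
    using xW proj_point_unit_rep unfolding proj_subspace_of_def by blast
  show "\<exists>e>0. \<forall>q\<in>proj_points. fs_dist x q < e \<longrightarrow> q \<in> \<Union>U"
  proof (intro exI[of _ "arccos (1 - \<epsilon>\<^sup>2/2)"] conjI ballI impI)
    show "0 < arccos (1 - \<epsilon>\<^sup>2/2)" using \<epsilon> by (intro arccos_one_minus_half_square_pos) auto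
    fix q assume q: "q \<in> proj_points" "fs_dist x q < arccos (1 - \<epsilon>\<^sup>2/2)"
    obtain v where v: "v \<in> q" "norm v = 1" "norm (v - u) \<le> \<epsilon>"
      using near_proj_point_unit_vector[OF u(1) q(1) \<epsilon>(1)] \<epsilon>(2) q(2) u(2) by auto
    define T where "T = frame_map {()} (\<lambda>_. u) (\<lambda>_. v)"
    have frame: "orthonormal_frame {()} (\<lambda>_. u)"
      using herm_self[of u] u(1) unfolding orthonormal_frame_def by simp
    have "norm (T y - y) \<le> \<epsilon> * norm y" for y
      using frame_map_norm_diff_le[OF frame, of "\<lambda>_. v" y] v(3) unfolding T_def
      by (simp add: mult_right_mono order_trans)
    then have "proj_subspace_of (T ` W) \<in> U" using near linear_frame_map unfolding T_def by blast
    moreover have "T ` x = q"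
      using frame_map_image_span[OF _ frame, of "\<lambda>_. v"] u(2) proj_point_eq_span[OF q(1) v(1)] v(2)
      unfolding T_def by fastforce
    then have "q \<in> proj_subspace_of (T ` W)"
      using xW q(1) unfolding proj_subspace_of_def by auto
    ultimately show "q \<in> \<Union>U" by blast
  qed
qed

section \<open>Orthonormal frames\<close>

lemma orthonormal_frame_dim:
  assumes I: "finite I" and f: "orthonormal_frame I f"
  shows "vec.dim (vec.span (f ` I)) = card I"
proof -
  have inj: "inj_on f I"
    using f unfolding orthonormal_frame_def by (metis (no_types, lifting) inj_onI zero_neq_one)
  have "vec.independent (f ` I)"
  proof (rule vec.independent_if_scalars_zero)
    show "finite (f ` I)" using I by simp
    fix c x assume sum0: "(\<Sum>x\<in>f ` I. c x *s x) = 0" and "x \<in> f ` I"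
    then obtain j where j: "j \<in> I" "x = f j" by auto
    have "0 = herm (\<Sum>x\<in>f ` I. c x *s x) (f j)" using sum0 by simp
    also have "\<dots> = (\<Sum>i\<in>I. c (f i) * herm (f i) (f j))"
      by (simp add: herm_sum_left herm_scale_left sum.reindex[OF inj])
    also have "\<dots> = (\<Sum>i\<in>I. if i = j then c (f j) else 0)"
      using f j unfolding orthonormal_frame_def by (intro sum.cong) auto
    also have "\<dots> = c x" using I j by simp
    finally show "c x = 0" by simp
  qed
  then show ?thesis using inj by (simp add: vec.dim_span vec.dim_eq_card_independent card_image)
qed

lemma orthonormal_frame_extend:
  assumes f: "orthonormal_frame {..<m} f" and u: "herm u u = 1"
    and orth: "\<And>i. i < m \<Longrightarrow> herm (f i) u = 0"
  shows "orthonormal_frame {..<Suc m} (f(m := u))"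
  unfolding orthonormal_frame_def
proof (intro ballI)
  fix i j assume "i \<in> {..<Suc m}" "j \<in> {..<Suc m}"
  then consider "i = m" "j = m" | "i = m" "j < m" | "i < m" "j = m" | "i < m" "j < m"
    by fastforce
  then show "herm ((f(m := u)) i) ((f(m := u)) j) = (if i = j then 1 else 0)"
  proof cases
    case 2
    then show ?thesis using orth[of j] by (simp add: herm_cnj_swap[of u])
  next
    case 4
    then show ?thesis using f unfolding orthonormal_frame_def by simp
  qed (use u orth in simp_all)
qed

lemma subspace_split_unit_vector:
  assumes W: "vec.subspace W" and uW: "u \<in> W" and u: "herm u u = 1"
  defines "W' \<equiv> {x\<in>W. herm x u = 0}"
  shows "vec.subspace W'" and "W = vec.span (insert u W')" and "vec.dim W = Suc (vec.dim W')"
proof -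
  show sW': "vec.subspace W'"
    unfolding vec.subspace_def W'_def
    using W vec.subspace_0 vec.subspace_add vec.subspace_scale
    by (auto simp: herm_add_left herm_scale_left)
  show WW': "W = vec.span (insert u W')"
  proof
    show "vec.span (insert u W') \<subseteq> W"
      using uW W by (intro vec.span_minimal) (auto simp: W'_def)
    show "W \<subseteq> vec.span (insert u W')"
    proof
      fix x assume x: "x \<in> W"
      have "x - herm x u *s u \<in> W'"
        unfolding W'_def using x uW W u
        by (auto simp: herm_diff_left herm_scale_left vec.subspace_diff vec.subspace_scale)
      then show "x \<in> vec.span (insert u W')"
        unfolding vec.span_insert vec.span_eq_iff[THEN iffD2, OF sW'] by blast
    qed
  qed
  have "u \<notin> vec.span W'"
    using u unfolding vec.span_eq_iff[THEN iffD2, OF sW'] by (simp add: W'_def)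
  then show "vec.dim W = Suc (vec.dim W')"
    using WW' vec.dim_insert[of u W'] sW' by simp
qed

lemma orthonormal_frame_exists:
  assumes "vec.subspace W" "vec.dim W = m"
  obtains f where "orthonormal_frame {..<m} f" "vec.span (f ` {..<m}) = W"
  using assms
proof (induction m arbitrary: W thesis)
  case 0
  then have "W = {0}" using vec.subspace_0 by auto
  then show ?case by (intro "0.prems"(1)[of "\<lambda>_. 0"]) (auto simp: orthonormal_frame_def)
next
  case (Suc m)
  have "\<not> W \<subseteq> {0}"
  proof
    assume "W \<subseteq> {0}"
    then have "vec.dim W = 0" by simp
    with Suc.prems(3) show False by simp
  qed
  then obtain w where w: "w \<in> W" "w \<noteq> 0" by blast
  define u where "u = complex_of_real (1 / norm w) *s w"
  have u: "herm u u = 1" using w herm_self[of u] unfolding u_def by (simp add: norm_scale norm_divide)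
  have uW: "u \<in> W" unfolding u_def using w Suc.prems(2) by (simp add: vec.subspace_scale)
  define W' where "W' = {x\<in>W. herm x u = 0}"
  note split = subspace_split_unit_vector[OF Suc.prems(2) uW u, folded W'_def]
  obtain f where f: "orthonormal_frame {..<m} f" "vec.span (f ` {..<m}) = W'"
    using Suc.IH[OF _ split(1)] split(3) Suc.prems(3) by auto
  have "f i \<in> W'" if "i < m" for i
    using f(2) vec.span_base[of "f i" "f ` {..<m}"] that by auto
  then have "orthonormal_frame {..<Suc m} (f(m := u))"
    using orthonormal_frame_extend[OF f(1) u] unfolding W'_def by auto
  moreover have "(f(m := u)) ` {..<Suc m} = insert u (f ` {..<m})"
    unfolding lessThan_Suc by auto
  then have "vec.span ((f(m := u)) ` {..<Suc m}) = W"
    using split(2) f(2) vec.span_eq_iff[THEN iffD2, OF split(1)] by (simp add: vec.span_insert)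
  ultimately show ?case by (rule Suc.prems(1))
qed

lemma grassmannian_frame:
  assumes "L \<in> grassmannian k"
  obtains F where "orthonormal_frame {..<k+1} F" "L = proj_subspace_of (vec.span (F ` {..<k+1}))"
  using assms orthonormal_frame_exists unfolding grassmannian_def by blast

section \<open>Limits of frames\<close>

lemma convergent_subseq_finite_family:
  fixes F :: "nat \<Rightarrow> 'i \<Rightarrow> 'a::heine_borel"
  assumes "finite I" and "bounded K" and "\<And>j i. i \<in> I \<Longrightarrow> F j i \<in> K"
  shows "\<exists>r G. strict_mono r \<and> (\<forall>i\<in>I. (\<lambda>j. F (r j) i) \<longlonglongrightarrow> G i)"
  using assms(1,3)
proof (induction I rule: finite_induct)
  case empty
  show ?case by (intro exI[of _ id]) (auto simp: strict_mono_def)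
next
  case (insert m I)
  then obtain r G where r: "strict_mono r" "\<forall>i\<in>I. (\<lambda>j. F (r j) i) \<longlonglongrightarrow> G i" by blast
  have "bounded (range (\<lambda>j. F (r j) m))"
    using insert.prems assms(2) by (auto intro: bounded_subset)
  then obtain l s where s: "strict_mono s" "((\<lambda>j. F (r j) m) \<circ> s) \<longlonglongrightarrow> l"
    using bounded_imp_convergent_subsequence by blast
  have "(\<lambda>j. F (r (s j)) i) \<longlonglongrightarrow> (G(m := l)) i" if "i \<in> insert m I" for i
  proof (cases "i = m")
    case False
    then show ?thesis using LIMSEQ_subseq_LIMSEQ[of "\<lambda>j. F (r j) i", OF _ s(1)] r(2) that
      by (simp add: o_def)
  qed (use s in \<open>simp add: o_def\<close>)
  moreover have "strict_mono (r \<circ> s)" using r(1) s(1) by (rule strict_mono_o)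
  ultimately show ?case by (intro exI[of _ "r \<circ> s"] exI[of _ "G(m := l)"]) (simp add: o_def)
qed

lemma orthonormal_frame_limit:
  assumes "\<And>j. orthonormal_frame I (F j)" and "\<And>i. i \<in> I \<Longrightarrow> (\<lambda>j. F j i) \<longlonglongrightarrow> G i"
  shows "orthonormal_frame I G"
  unfolding orthonormal_frame_def
proof (intro ballI)
  fix i j assume "i \<in> I" "j \<in> I"
  then have "(\<lambda>n. herm (F n i) (F n j)) \<longlonglongrightarrow> herm (G i) (G j)"
    using assms(2) by (intro herm_tendsto)
  moreover have "(\<lambda>n. herm (F n i) (F n j)) = (\<lambda>n. if i = j then 1 else 0)"
    using assms(1) \<open>i \<in> I\<close> \<open>j \<in> I\<close> unfolding orthonormal_frame_def by auto
  ultimately show "herm (G i) (G j) = (if i = j then 1 else 0)"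
    using LIMSEQ_unique tendsto_const by metis
qed

lemma closed_vec_subspace:
  assumes "vec.subspace (W :: (complex^'n) set)"
  shows "closed W"
proof (rule closed_subspace)
  have "c *\<^sub>R x = complex_of_real c *s x" for c and x :: "complex^'n"
    unfolding vec_eq_iff using scaleR_conv_of_real[of c "x $ i" for i] by simp
  then show "subspace W" unfolding subspace_def
    using assms vec.subspace_0 vec.subspace_add vec.subspace_scale by auto
qed

text \<open>The frame map from \<open>F j\<close> to G moves \<open>a j\<close> into the span of G by an amount
 that tends to 0.\<close>
lemma frame_limit_span_mem:
  assumes I: "finite I" and F: "\<And>j. orthonormal_frame I (F j)"
    and FG: "\<And>i. i \<in> I \<Longrightarrow> (\<lambda>j. F j i) \<longlonglongrightarrow> G i"
    and a: "\<And>j. a j \<in> vec.span (F j ` I)" and au: "a \<longlonglongrightarrow> u"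
  shows "u \<in> vec.span (G ` I)"
proof -
  define b where "b j = frame_map I (F j) G (a j)" for j
  have bG: "b j \<in> vec.span (G ` I)" for j
    using frame_map_image_span[OF I F, of j G] a[of j] unfolding b_def by blast
  have "(\<lambda>j. G i - F j i) \<longlonglongrightarrow> 0" if "i \<in> I" for i
    using tendsto_diff[OF tendsto_const FG[OF that], of "G i"] by simp
  then have "(\<lambda>j. \<Sum>i\<in>I. norm (G i - F j i)) \<longlonglongrightarrow> 0"
    by (intro tendsto_null_sum tendsto_norm_zero)
  from tendsto_mult[OF this tendsto_norm[OF au]]
  have "(\<lambda>j. (\<Sum>i\<in>I. norm (G i - F j i)) * norm (a j)) \<longlonglongrightarrow> 0" by simp
  moreover have "\<forall>j. norm (b j - a j) \<le> (\<Sum>i\<in>I. norm (G i - F j i)) * norm (a j)"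
    unfolding b_def by (intro allI frame_map_norm_diff_le[OF F])
  ultimately have "(\<lambda>j. b j - a j) \<longlonglongrightarrow> 0"
    by (rule Lim_null_comparison[OF always_eventually, rotated])
  from tendsto_add[OF this au] have "b \<longlonglongrightarrow> u" by simp
  then show ?thesis
    by (rule closed_sequentially[OF closed_vec_subspace[OF vec.subspace_span] bG])
qed

lemma openin_grassmannian_near_frames:
  assumes S: "openin (grassmannian_topology k) S"
    and I: "finite I" "card I = k + 1" and G: "orthonormal_frame I G"
    and GS: "proj_subspace_of (vec.span (G ` I)) \<in> S"
  obtains \<epsilon> where "0 < \<epsilon>"
    and "\<And>F. (\<Sum>i\<in>I. norm (F i - G i)) \<le> \<epsilon> \<Longrightarrow> proj_subspace_of (vec.span (F ` I)) \<in> S"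
proof -
  obtain \<epsilon> where \<epsilon>: "0 < \<epsilon>" and near: "\<And>T. vec_linear T \<Longrightarrow>
      (\<And>x. norm (T x - x) \<le> \<epsilon> * norm x) \<Longrightarrow> proj_subspace_of (T ` vec.span (G ` I)) \<in> S"
    using openin_grassmannian_near_identity[OF S vec.subspace_span _ GS]
      orthonormal_frame_dim[OF I(1) G] I(2) by metis
  have "proj_subspace_of (vec.span (F ` I)) \<in> S" if F: "(\<Sum>i\<in>I. norm (F i - G i)) \<le> \<epsilon>" for F
  proof -
    have "norm (frame_map I G F x - x) \<le> \<epsilon> * norm x" for x
      using frame_map_norm_diff_le[OF G, of F x] F by (meson mult_right_mono norm_ge_zero order_trans)
    then show ?thesis
      using near[OF linear_frame_map] frame_map_image_span[OF I(1) G] by metis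
  qed
  with \<epsilon> that show ?thesis by blast
qed

lemma unit_vectors_tendsto:
  assumes u: "norm u = 1" and S: "S \<subseteq> proj_points"
    and near: "\<And>e. 0 < e \<Longrightarrow> \<exists>q\<in>S. fs_dist (vec.span {u}) q < e"
  obtains a where "\<And>j. vec.span {a j} \<in> S" and "a \<longlonglongrightarrow> u"
proof -
  define t where "t j = inverse (real (Suc j))" for j
  have t: "0 < t j" "t j \<le> 1" for j unfolding t_def by (auto simp: field_simps)
  have "\<exists>v. vec.span {v} \<in> S \<and> norm (v - u) \<le> t j" for j
  proof -
    obtain q where q: "q \<in> S" "fs_dist (vec.span {u}) q < arccos (1 - (t j)\<^sup>2/2)"
      using near arccos_one_minus_half_square_pos[OF t] by blast
    have "q \<in> proj_points" using q(1) S by blast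
    obtain v where "v \<in> q" "norm v = 1" "norm (v - u) \<le> t j"
      using near_proj_point_unit_vector[OF u \<open>q \<in> proj_points\<close> t q(2)] .
    then show ?thesis using q(1) proj_point_eq_span[OF \<open>q \<in> proj_points\<close>] by fastforce
  qed
  then obtain a where a: "\<And>j. vec.span {a j} \<in> S" "\<And>j. norm (a j - u) \<le> t j" by metis
  have "t \<longlonglongrightarrow> 0" unfolding t_def by (rule LIMSEQ_inverse_real_of_nat)
  moreover have "\<forall>j. norm (a j - u) \<le> t j" using a(2) by blast
  ultimately have "(\<lambda>j. a j - u) \<longlonglongrightarrow> 0"
    by (rule Lim_null_comparison[OF always_eventually, rotated])
  then have "a \<longlonglongrightarrow> u" by (simp add: LIM_zero_iff)
  with a(1) show ?thesis by (rule that)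
qed

lemma closedin_Union_grassmannian:
  assumes U: "U \<subseteq> grassmannian k" and "closedin (grassmannian_topology k) U"
  shows "closedin proj_topology (\<Union>U)"
proof -
  define I where "I = {..<k+1}"
  have I: "finite I" "card I = k + 1" unfolding I_def by auto
  have co: "openin (grassmannian_topology k) (grassmannian k - U)"
    using assms(2) unfolding closedin_def grassmannian_topology_def topspace_dist_topology by simp
  have "\<exists>e>0. \<forall>q\<in>proj_points. fs_dist p q < e \<longrightarrow> q \<in> proj_points - \<Union>U"
    if p: "p \<in> proj_points" "p \<notin> \<Union>U" for p
  proof (rule ccontr)
    assume not_open: "\<not> ?thesis"
    obtain u where u: "norm u = 1" "p = vec.span {u}" using proj_point_unit_rep[OF p(1)] .
    have "\<exists>q\<in>\<Union>U. fs_dist (vec.span {u}) q < e" if "0 < e" for e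
      using not_open that unfolding u(2)[symmetric] by blast
    then obtain a where a: "\<And>j. vec.span {a j} \<in> \<Union>U" "a \<longlonglongrightarrow> u"
      using unit_vectors_tendsto[OF u(1) proj_points_Union_grassmannian[OF U]] by blast
    have "\<exists>F. orthonormal_frame I F \<and> proj_subspace_of (vec.span (F ` I)) \<in> U
              \<and> a j \<in> vec.span (F ` I)" for j
    proof -
      obtain L where L: "L \<in> U" "vec.span {a j} \<in> L" using a(1) by blast
      then obtain F where F: "orthonormal_frame I F" "L = proj_subspace_of (vec.span (F ` I))"
        using grassmannian_frame U unfolding I_def by blast
      then have "a j \<in> vec.span (F ` I)"
        using L(2) vec.span_base[of "a j" "{a j}"] unfolding proj_subspace_of_def by blast
      then show ?thesis using F L(1) by blast
    qed
    then obtain F where F: "\<And>j. orthonormal_frame I (F j)"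
        "\<And>j. proj_subspace_of (vec.span (F j ` I)) \<in> U" "\<And>j. a j \<in> vec.span (F j ` I)"
      by metis
    have "F j i \<in> cball 0 1" if "i \<in> I" for j i
      using orthonormal_frame_norm[OF F(1) that] by simp
    then obtain r G where r: "strict_mono r" and FG: "\<And>i. i \<in> I \<Longrightarrow> (\<lambda>j. F (r j) i) \<longlonglongrightarrow> G i"
      using convergent_subseq_finite_family[OF I(1) bounded_cball] by blast
    have G: "orthonormal_frame I G" using orthonormal_frame_limit[OF F(1) FG] .
    have "(\<lambda>j. a (r j)) \<longlonglongrightarrow> u" using LIMSEQ_subseq_LIMSEQ[OF a(2) r] by (simp add: o_def)
    then have "u \<in> vec.span (G ` I)"
      using frame_limit_span_mem[of I "\<lambda>j. F (r j)" G "\<lambda>j. a (r j)" u] I(1) F(1,3) FG by blast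
    then have "p \<in> proj_subspace_of (vec.span (G ` I))"
      using p(1) u(2) unfolding proj_subspace_of_def by (simp add: vec.span_minimal)
    moreover have "proj_subspace_of (vec.span (G ` I)) \<in> U"
    proof (rule ccontr)
      assume "proj_subspace_of (vec.span (G ` I)) \<notin> U"
      moreover have "proj_subspace_of (vec.span (G ` I)) \<in> grassmannian k"
        using orthonormal_frame_dim[OF I(1) G] I(2) unfolding grassmannian_def by auto
      ultimately obtain \<epsilon> where "0 < \<epsilon>" and near_G: "\<And>F'. (\<Sum>i\<in>I. norm (F' i - G i)) \<le> \<epsilon> \<Longrightarrow>
          proj_subspace_of (vec.span (F' ` I)) \<in> grassmannian k - U"
        using openin_grassmannian_near_frames[OF co I G] by blast
      have "(\<lambda>j. \<Sum>i\<in>I. norm (F (r j) i - G i)) \<longlonglongrightarrow> 0"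
        using FG by (intro tendsto_null_sum tendsto_norm_zero) (simp add: LIM_zero)
      from order_tendstoD(2)[OF this \<open>0 < \<epsilon>\<close>]
      obtain j where "(\<Sum>i\<in>I. norm (F (r j) i - G i)) \<le> \<epsilon>"
        unfolding eventually_sequentially using less_imp_le by blast
      then show False using near_G F(2) by blast
    qed
    ultimately show False using p(2) by blast
  qed
  then have "openin proj_topology (proj_points - \<Union>U)"
    unfolding proj_topology_def openin_dist_topology by blast
  then show ?thesis
    unfolding closedin_def proj_topology_def topspace_dist_topology
    using proj_points_Union_grassmannian[OF U] by simp
qed

text \<open>The argument works for every k.\<close>
theorem mainTheorem18:
  fixes n k :: nat
    and U :: "((complex^'n) set) set set"
  assumes "CARD('n) = n + 1"
    and "k < n"
    and "U \<subseteq> grassmannian k"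
  shows "(openin (grassmannian_topology k) U \<longrightarrow> openin proj_topology (\<Union>U))
       \<and> (closedin (grassmannian_topology k) U \<longrightarrow> closedin proj_topology (\<Union>U))"
  using openin_Union_grassmannian[OF assms(3)] closedin_Union_grassmannian[OF assms(3)] by blast

end
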